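(* Let $X:=\{x_i\}_{i\in[n]}$ be points in $\mathbb{R}^d$, identified with the $d\times n$ matrix with columns $x_i$, let $k\ge1$, and let $P\in\mathbb{R}^{d\times d}$ be any orthogonal projection matrix. Then \[\min_{Z\in\mathcal{Z}(n,k)}\frac12\operatorname{tr}(D_XZ)\ge \|PX\|_F^2-k\|PX\|_{2\to2}^2.\]
   Context: $D_X\in\mathbb{R}^{n\times n}$ has entries $(D_X)_{ij}=\|x_i-x_j\|^2$. $\mathcal{Z}(n,k):=\{Z\in\mathbb{R}^{n\times n}: Z\mathbf 1=\mathbf 1,\ \operatorname{tr}Z=k,\ Z\ge0\text{ entrywise},\ Z\succeq0\}$. *)

theory Defs
  imports "HOL-Analysis.Analysis"
begin

definition dist_matrix :: "real^'n^'d \<Rightarrow> real^'n^'n" where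
  "dist_matrix X = (\<chi> i j. (norm (column i X - column j X))\<^sup>2)"

definition psd :: "real^'n^'n \<Rightarrow> bool" where
  "psd Z \<longleftrightarrow> transpose Z = Z \<and> (\<forall>v. 0 \<le> v \<bullet> (Z *v v))"

definition Zset :: "real \<Rightarrow> (real^'n^'n) set" where
  "Zset k = {Z. Z *v (\<chi> i. 1) = (\<chi> i. 1) \<and> trace Z = k \<and>
                (\<forall>i j. 0 \<le> Z $ i $ j) \<and> psd Z}"

definition orth_proj :: "real^'d^'d \<Rightarrow> bool" where
  "orth_proj P \<longleftrightarrow> transpose P = P \<and> P ** P = P"

definition frob_norm_sq :: "real^'n^'m \<Rightarrow> real" where
  "frob_norm_sq A = (\<Sum>i\<in>UNIV. \<Sum>j\<in>UNIV. (A $ i $ j)\<^sup>2)"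

definition op_norm :: "real^'n^'m \<Rightarrow> real" where
  "op_norm A = onorm (\<lambda>v. A *v v)"

end

theory Submission
  imports Defs
begin

(* For symmetric Z with unit row sums, (1/2) tr(D_Y Z) = ||Y||_F^2 - <Z, Y^T Y> for every Y,
   where <.,.> is the entrywise inner product; passing from Y = PX to X only increases the
   left side, since P is a contraction and Z is entrywise nonnegative.  It remains to show
   <Z, Y^T Y> <= ||Y||_{2->2}^2 tr Z, i.e. <Z, W> >= 0 for the psd matrix
   W = ||Y||_{2->2}^2 I - Y^T Y.  This holds for every psd Z, by induction on its diagonal
   support: for a pivot a with Z_aa > 0 and z the a-th row of Z, the matrix Z - z z^T / Z_aa
   is psd with smaller diagonal support, and the split-off term is z^T W z / Z_aa >= 0. *)

definition frob_inner :: "real^'n^'m \<Rightarrow> real^'n^'m \<Rightarrow> real" where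
  "frob_inner A B = (\<Sum>i\<in>UNIV. \<Sum>j\<in>UNIV. A$i$j * B$i$j)"

definition outer_prod :: "real^'m \<Rightarrow> real^'n \<Rightarrow> real^'n^'m" where
  "outer_prod u w = (\<chi> i j. u$i * w$j)"

lemma outer_prod_mult_vector: "outer_prod u w *v y = (w \<bullet> y) *\<^sub>R u"
  by (simp add: outer_prod_def inner_vec_def matrix_vector_mult_def vec_eq_iff
      sum_distrib_left mult_ac)

lemma frob_inner_outer_prod: "frob_inner (outer_prod u u) W = u \<bullet> (W *v u)"
  by (simp add: frob_inner_def outer_prod_def inner_vec_def matrix_vector_mult_def
      sum_distrib_left mult_ac)

lemma frob_inner_diff_left: "frob_inner (A - B) W = frob_inner A W - frob_inner B W"
  by (simp add: frob_inner_def left_diff_distrib sum_subtractf)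

lemma frob_inner_scaleR_left: "frob_inner (c *\<^sub>R A) W = c * frob_inner A W"
  by (simp add: frob_inner_def sum_distrib_left mult.assoc)

lemma frob_inner_commute: "frob_inner A B = frob_inner B A"
  by (simp add: frob_inner_def mult.commute)

lemma frob_inner_mat_1: "frob_inner (mat 1) (A :: real^'n^'n) = trace A"
  by (simp add: frob_inner_def trace_def mat_def if_distrib[of "\<lambda>x. x * a" for a] cong: if_cong)

lemma frob_inner_mono_left:
  assumes "\<And>i j. A$i$j \<le> B$i$j" and "\<And>i j. 0 \<le> W$i$j"
  shows "frob_inner A W \<le> frob_inner B W"
  unfolding frob_inner_def by (intro sum_mono mult_right_mono assms)

lemma transpose_eq_self_entry: "transpose Z = Z \<Longrightarrow> Z$i$j = Z$j$i"
  by (metis transpose_def vec_lambda_beta)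

lemma trace_mult_symmetric:
  assumes "transpose Z = Z"
  shows "trace (A ** Z) = frob_inner A Z"
  using transpose_eq_self_entry[OF assms]
  by (simp add: trace_def matrix_matrix_mult_def frob_inner_def)

lemma psd_symmetric: "psd Z \<Longrightarrow> Z$i$j = Z$j$i"
  unfolding psd_def by (blast intro: transpose_eq_self_entry)

lemma quadratic_form_axis: "axis i 1 \<bullet> (Z *v axis i 1) = Z$i$i"
  by (simp add: matrix_vector_mult_basis inner_axis' column_def)

lemma psd_diag_nonneg: "psd Z \<Longrightarrow> 0 \<le> Z$i$i"
  unfolding psd_def by (metis quadratic_form_axis)

lemma quadratic_form_add_axis:
  fixes Z :: "real^'n^'n"
  assumes "transpose Z = Z"
  shows "(v + t *\<^sub>R axis a 1) \<bullet> (Z *v (v + t *\<^sub>R axis a 1))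
           = v \<bullet> (Z *v v) + 2 * t * (Z *v v)$a + t\<^sup>2 * Z$a$a"
proof -
  have "v \<bullet> (Z *v axis a 1) = (Z *v v)$a"
    using assms by (metis matrix_vector_mult_basis column_transpose row_def vec_lambda_eta
        matrix_vector_mul_component inner_commute)
  then show ?thesis
    by (simp add: algebra_simps inner_axis' matrix_vector_mult_basis
        column_def power2_eq_square)
qed

lemma psd_diag_zero_row_zero:
  assumes "psd Z" and "Z$a$a = 0"
  shows "Z$a$j = 0"
proof (rule ccontr)
  assume "Z$a$j \<noteq> 0"
  define t where "t = - (Z$j$j + 1) / (2 * Z$a$j)"
  have "(axis j 1 + t *\<^sub>R axis a 1) \<bullet> (Z *v (axis j 1 + t *\<^sub>R axis a 1)) = -1"
    using \<open>Z$a$j \<noteq> 0\<close> assms psd_symmetric[OF assms(1), of a j]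
    by (simp add: quadratic_form_add_axis psd_def matrix_vector_mult_basis inner_axis' column_def t_def
        field_simps)
  then show False
    using assms(1) unfolding psd_def by (metis neg_0_le_iff_le not_one_le_zero)
qed

lemma psd_deflate:
  fixes Z :: "real^'n^'n"
  assumes "psd Z" and "0 < Z$a$a"
  shows "psd (Z - (1 / Z$a$a) *\<^sub>R outer_prod (Z$a) (Z$a))"
proof -
  have sym: "transpose Z = Z" using assms(1) by (simp add: psd_def)
  have "0 \<le> v \<bullet> ((Z - (1 / Z$a$a) *\<^sub>R outer_prod (Z$a) (Z$a)) *v v)" for v
  proof -
    define s where "s = (Z *v v)$a"
    have "Z$a \<bullet> v = s" by (simp add: s_def matrix_vector_mul_component)
    then have "v \<bullet> ((Z - (1 / Z$a$a) *\<^sub>R outer_prod (Z$a) (Z$a)) *v v)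
        = v \<bullet> (Z *v v) - s\<^sup>2 / Z$a$a"
      by (simp add: algebra_simps scaleR_matrix_vector_assoc[symmetric] outer_prod_mult_vector
          inner_commute power2_eq_square)
    also have "\<dots> = (v + (- s / Z$a$a) *\<^sub>R axis a 1) \<bullet> (Z *v (v + (- s / Z$a$a) *\<^sub>R axis a 1))"
      unfolding quadratic_form_add_axis[OF sym] s_def[symmetric]
      using assms(2) by (simp add: field_simps power2_eq_square)
    finally show ?thesis using assms(1) by (simp add: psd_def)
  qed
  moreover have "transpose (outer_prod (Z$a) (Z$a)) = outer_prod (Z$a) (Z$a)"
    by (simp add: transpose_def outer_prod_def vec_eq_iff mult.commute)
  ultimately show ?thesis
    using sym by (simp add: psd_def transpose_def vec_eq_iff)
qed

lemma frob_inner_psd_nonneg: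
  fixes Z W :: "real^'n^'n"
  assumes "psd Z" and "psd W"
  shows "0 \<le> frob_inner Z W"
proof -
  have diag_support_induct:
    "0 \<le> frob_inner Z W" if "finite I" "psd Z" "{i. Z$i$i \<noteq> 0} \<subseteq> I" for I Z
    using that
  proof (induction I arbitrary: Z rule: finite_induct)
    case empty
    then have "Z$i$j = 0" for i j
      using psd_diag_zero_row_zero[OF empty.prems(1)] by blast
    then have "Z = 0" by (simp add: vec_eq_iff)
    then show ?case by (simp add: frob_inner_def)
  next
    case (insert a I Z)
    show ?case
    proof (cases "Z$a$a = 0")
      case True
      then have "{i. Z$i$i \<noteq> 0} \<subseteq> I" using insert.prems(2) by auto
      then show ?thesis by (rule insert.IH[OF insert.prems(1)])
    next
      case False
      define d where "d = Z$a$a"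
      define Z' where "Z' = Z - (1 / d) *\<^sub>R outer_prod (Z$a) (Z$a)"
      have "0 < d"
        using False psd_diag_nonneg[OF insert.prems(1), of a] by (simp add: d_def)
      have "psd Z'"
        unfolding Z'_def d_def by (rule psd_deflate[OF insert.prems(1)]) (use \<open>0 < d\<close> d_def in simp)
      have "Z'$i$i = 0" if "i \<notin> I" for i
      proof (cases "i = a")
        case True
        then show ?thesis using \<open>0 < d\<close> by (simp add: Z'_def outer_prod_def d_def)
      next
        case False
        then have "Z$i$i = 0" using that insert.prems(2) by blast
        then have "Z$i$a = 0" by (rule psd_diag_zero_row_zero[OF insert.prems(1)])
        then have "Z$a$i = 0" using psd_symmetric[OF insert.prems(1), of a i] by simp
        then show ?thesis using \<open>Z$i$i = 0\<close> by (simp add: Z'_def outer_prod_def)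
      qed
      then have "{i. Z'$i$i \<noteq> 0} \<subseteq> I" by blast
      then have "0 \<le> frob_inner Z' W" by (rule insert.IH[OF \<open>psd Z'\<close>])
      moreover have "0 \<le> Z$a \<bullet> (W *v Z$a) / d"
        using \<open>0 < d\<close> assms(2) by (simp add: psd_def)
      moreover have "frob_inner Z W = frob_inner Z' W + Z$a \<bullet> (W *v Z$a) / d"
        by (simp add: Z'_def frob_inner_diff_left frob_inner_scaleR_left frob_inner_outer_prod)
      ultimately show ?thesis by linarith
    qed
  qed
  show ?thesis using diag_support_induct[of UNIV Z] assms(1) by simp
qed

lemma quadratic_form_gram:
  fixes A :: "real^'n^'m"
  shows "v \<bullet> (transpose A ** A *v v) = (A *v v) \<bullet> (A *v v)"
proof -
  have "v \<bullet> (transpose A ** A *v v) = v \<bullet> ((A *v v) v* A)"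
    by (simp add: matrix_vector_mul_assoc[symmetric])
  also have "\<dots> = ((A *v v) v* A) \<bullet> v" by (rule inner_commute)
  finally show ?thesis by (simp add: dot_lmul_matrix)
qed

lemma op_norm_bound: "norm (A *v v) \<le> op_norm A * norm v"
  unfolding op_norm_def by (rule onorm) simp

lemma psd_op_norm_sq_minus_gram: "psd ((op_norm Y)\<^sup>2 *\<^sub>R mat 1 - transpose Y ** Y)"
  unfolding psd_def
proof (intro conjI allI)
  show "transpose ((op_norm Y)\<^sup>2 *\<^sub>R mat 1 - transpose Y ** Y) = (op_norm Y)\<^sup>2 *\<^sub>R mat 1 - transpose Y ** Y"
    by (simp add: transpose_def mat_def matrix_matrix_mult_def vec_eq_iff mult.commute)
next
  fix v :: "real^'a"
  have "v \<bullet> (transpose Y ** Y *v v) = (Y *v v) \<bullet> (Y *v v)"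
    by (simp add: quadratic_form_gram)
  moreover have "(norm (Y *v v))\<^sup>2 \<le> (op_norm Y * norm v)\<^sup>2"
    by (rule power_mono[OF op_norm_bound norm_ge_zero])
  then have "(Y *v v) \<bullet> (Y *v v) \<le> (op_norm Y)\<^sup>2 * (v \<bullet> v)"
    by (simp add: power_mult_distrib power2_norm_eq_inner)
  ultimately show "0 \<le> v \<bullet> (((op_norm Y)\<^sup>2 *\<^sub>R mat 1 - transpose Y ** Y) *v v)"
    by (simp add: algebra_simps scaleR_matrix_vector_assoc[symmetric])
qed

lemma frob_inner_gram_le:
  assumes "psd Z"
  shows "frob_inner Z (transpose Y ** Y) \<le> (op_norm Y)\<^sup>2 * trace Z"
proof -
  have "0 \<le> frob_inner ((op_norm Y)\<^sup>2 *\<^sub>R mat 1 - transpose Y ** Y) Z"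
    using frob_inner_psd_nonneg[OF psd_op_norm_sq_minus_gram assms] .
  then show ?thesis
    by (simp add: frob_inner_diff_left frob_inner_scaleR_left frob_inner_mat_1
        frob_inner_commute[of "transpose Y ** Y"])
qed

lemma column_matrix_mult: "column i (A ** B) = A *v column i B"
  by (simp add: column_def matrix_matrix_mult_def matrix_vector_mult_def vec_eq_iff)

lemma norm_orth_proj_le:
  assumes "orth_proj P"
  shows "norm (P *v v) \<le> norm v"
proof -
  have "(P *v v) \<bullet> (P *v v) = v \<bullet> (transpose P ** P *v v)"
    by (simp add: quadratic_form_gram)
  also have "\<dots> = v \<bullet> (P *v v)"
    using assms by (simp add: orth_proj_def)
  also have "\<dots> \<le> norm v * norm (P *v v)"
    by (rule norm_cauchy_schwarz)
  finally have "norm (P *v v) * norm (P *v v) \<le> norm v * norm (P *v v)"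
    by (simp add: power2_norm_eq_inner[symmetric] power2_eq_square)
  then show ?thesis
    by (cases "norm (P *v v) = 0") (auto simp: mult_le_cancel_right)
qed

lemma dist_matrix_orth_proj_le:
  assumes "orth_proj P"
  shows "dist_matrix (P ** X) $ i $ j \<le> dist_matrix X $ i $ j"
  using norm_orth_proj_le[OF assms, of "column i X - column j X"]
  by (simp add: dist_matrix_def column_matrix_mult matrix_vector_mult_diff_distrib power_mono)

lemma frob_norm_sq_columns: "frob_norm_sq Y = (\<Sum>i\<in>UNIV. column i Y \<bullet> column i Y)"
  unfolding frob_norm_sq_def
  by (subst sum.swap) (simp add: inner_vec_def column_def power2_eq_square)

lemma half_trace_dist_matrix:
  fixes Y :: "real^'n^'d" and Z :: "real^'n^'n"
  assumes sym: "transpose Z = Z" and stochastic: "Z *v (\<chi> i. 1) = (\<chi> i. 1)"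
  shows "(1/2) * trace (dist_matrix Y ** Z) = frob_norm_sq Y - frob_inner Z (transpose Y ** Y)"
proof -
  define G where "G = transpose Y ** Y"
  define n where "n i = column i Y \<bullet> column i Y" for i
  have rows: "(\<Sum>j\<in>UNIV. Z$i$j) = 1" for i
    using arg_cong[OF stochastic, of "\<lambda>x. x $ i"] by (simp add: matrix_vector_mult_def)
  have cols: "(\<Sum>i\<in>UNIV. Z$i$j) = 1" for j
    using rows[of j] transpose_eq_self_entry[OF sym, of _ j] by simp
  have dist_sq: "(norm (column i Y - column j Y))\<^sup>2 = n i + n j - 2 * G$i$j" for i j
    using dot_norm_neg[of "column i Y" "column j Y"]
    unfolding G_def n_def matrix_mult_transpose_dot_column power2_norm_eq_inner[symmetric]
    by simp
  have "trace (dist_matrix Y ** Z) = (\<Sum>i\<in>UNIV. \<Sum>j\<in>UNIV. (n i + n j - 2 * G$i$j) * Z$i$j)"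
    by (simp add: trace_mult_symmetric[OF sym] frob_inner_def dist_matrix_def dist_sq)
  also have "\<dots> = (\<Sum>i\<in>UNIV. n i * (\<Sum>j\<in>UNIV. Z$i$j)) + (\<Sum>i\<in>UNIV. \<Sum>j\<in>UNIV. n j * Z$i$j)
      - 2 * frob_inner Z G"
    by (simp add: algebra_simps sum.distrib sum_subtractf sum_distrib_left frob_inner_def)
  also have "(\<Sum>i\<in>UNIV. \<Sum>j\<in>UNIV. n j * Z$i$j) = (\<Sum>j\<in>UNIV. n j * (\<Sum>i\<in>UNIV. Z$i$j))"
    by (subst sum.swap) (simp add: sum_distrib_left)
  finally show ?thesis
    by (simp add: rows cols frob_norm_sq_columns n_def G_def)
qed

theorem lemma18:
  fixes X :: "real^'n^'d" and P :: "real^'d^'d" and k :: nat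
  assumes "k \<ge> 1" and "orth_proj P"
  shows "\<forall>Z \<in> Zset (real k).
           (1/2) * trace (dist_matrix X ** Z) \<ge>
             frob_norm_sq (P ** X) - real k * (op_norm (P ** X))\<^sup>2"
proof
  fix Z :: "real^'n^'n"
  assume "Z \<in> Zset (real k)"
  then have stochastic: "Z *v (\<chi> i. 1) = (\<chi> i. 1)" and "trace Z = real k"
    and nonneg: "\<forall>i j. 0 \<le> Z $ i $ j" and "psd Z"
    by (auto simp: Zset_def)
  from \<open>psd Z\<close> have sym: "transpose Z = Z" by (simp add: psd_def)
  have "frob_norm_sq (P ** X) - real k * (op_norm (P ** X))\<^sup>2
      \<le> frob_norm_sq (P ** X) - frob_inner Z (transpose (P ** X) ** (P ** X))"
    using frob_inner_gram_le[OF \<open>psd Z\<close>, of "P ** X"] \<open>trace Z = real k\<close>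
    by (simp only: mult.commute)
  also have "\<dots> = (1/2) * trace (dist_matrix (P ** X) ** Z)"
    by (rule half_trace_dist_matrix[OF sym stochastic, symmetric])
  also have "\<dots> \<le> (1/2) * trace (dist_matrix X ** Z)"
    using frob_inner_mono_left[where W = Z, OF dist_matrix_orth_proj_le[OF assms(2)]] nonneg
    by (simp add: trace_mult_symmetric[OF sym])
  finally show "(1/2) * trace (dist_matrix X ** Z) \<ge>
      frob_norm_sq (P ** X) - real k * (op_norm (P ** X))\<^sup>2" .
qed

end
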